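(* Let $(X,\rho)$ be a complete metric space, $D\subset X$ a closed subset, and $f:D\to\mathbb{R}$ a lower semicontinuous function. Define the set-valued map $L_f:\mathbb{R}\rightrightarrows D$ by $L_f(r)=[f\le r]\cup\partial D$, where $[f\le r]=\{x\in D: f(x)\le r\}$. Then $L_f$ is outer semicontinuous. Moreover, for $\bar r\in f(D)$, $L_f$ is continuous at $\bar r$ if and only if there is no $x\in\operatorname{int}(D)$ such that $f(x)=\bar r$ and $x$ is a local minimizer of $f$.
   Context: For a sequence of sets $C_\nu$ in a metric space, the outer limit $\limsup_\nu C_\nu$ is the set of all cluster points of sequences $x_\nu\in C_\nu$, and the inner limit $\liminf_\nu C_\nu$ is the set of all limits of sequences $x_\nu\in C_\nu$ (for $\nu$ large). For a set-valued map $S$, $\limsup_{x\to\bar x}S(x)$ is the union of $\limsup_\nu S(x_\nu)$ over all sequences $x_\nu\to\bar x$, and $\liminf_{x\to\bar x}S(x)$ is the intersection of $\liminf_\nu S(x_\nu)$ over all sequences $x_\nu\to\bar x$. $S$ is outer semicontinuous at $\bar x$ if $\limsup_{x\to\bar x}S(x)\subset S(\bar x)$, inner semicontinuous at $\bar x$ if $\liminf_{x\to\bar x}S(x)\supset S(\bar x)$, and continuous at $\bar x$ if both hold; outer semicontinuous means outer semicontinuous at every point. $\operatorname{int}(D)$ and $\partial D$ denote interior and boundary of $D$ in $X$. *)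

theory Defs
  imports "HOL-Analysis.Analysis"
begin

definition lsc_on :: "'a::metric_space set \<Rightarrow> ('a \<Rightarrow> real) \<Rightarrow> bool" where
  "lsc_on D f \<longleftrightarrow> (\<forall>x\<in>D. \<forall>e>0. \<exists>d>0. \<forall>y\<in>D. dist y x < d \<longrightarrow> f x - e < f y)"

definition seq_outer_limit :: "(nat \<Rightarrow> 'a::metric_space set) \<Rightarrow> 'a set" where
  "seq_outer_limit C = {x. \<exists>\<sigma> y. strict_mono \<sigma> \<and> (\<forall>n. y n \<in> C (\<sigma> n)) \<and> y \<longlonglongrightarrow> x}"

definition seq_inner_limit :: "(nat \<Rightarrow> 'a::metric_space set) \<Rightarrow> 'a set" where
  "seq_inner_limit C = {x. \<exists>y. (\<forall>\<^sub>F n in sequentially. y n \<in> C n) \<and> y \<longlonglongrightarrow> x}"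

definition outer_limit :: "('b::metric_space \<Rightarrow> 'a::metric_space set) \<Rightarrow> 'b \<Rightarrow> 'a set" where
  "outer_limit S xb = (\<Union>r\<in>{r. r \<longlonglongrightarrow> xb}. seq_outer_limit (\<lambda>n. S (r n)))"

definition inner_limit :: "('b::metric_space \<Rightarrow> 'a::metric_space set) \<Rightarrow> 'b \<Rightarrow> 'a set" where
  "inner_limit S xb = (\<Inter>r\<in>{r. r \<longlonglongrightarrow> xb}. seq_inner_limit (\<lambda>n. S (r n)))"

definition osc_at :: "('b::metric_space \<Rightarrow> 'a::metric_space set) \<Rightarrow> 'b \<Rightarrow> bool" where
  "osc_at S xb \<longleftrightarrow> outer_limit S xb \<subseteq> S xb"

definition isc_at :: "('b::metric_space \<Rightarrow> 'a::metric_space set) \<Rightarrow> 'b \<Rightarrow> bool" where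
  "isc_at S xb \<longleftrightarrow> S xb \<subseteq> inner_limit S xb"

definition setval_continuous_at :: "('b::metric_space \<Rightarrow> 'a::metric_space set) \<Rightarrow> 'b \<Rightarrow> bool" where
  "setval_continuous_at S xb \<longleftrightarrow> osc_at S xb \<and> isc_at S xb"

definition osc :: "('b::metric_space \<Rightarrow> 'a::metric_space set) \<Rightarrow> bool" where
  "osc S \<longleftrightarrow> (\<forall>xb. osc_at S xb)"

definition local_minimizer :: "'a::metric_space set \<Rightarrow> ('a \<Rightarrow> real) \<Rightarrow> 'a \<Rightarrow> bool" where
  "local_minimizer D f x \<longleftrightarrow> x \<in> D \<and> (\<exists>e>0. \<forall>y\<in>D. dist y x < e \<longrightarrow> f x \<le> f y)"

end

theory Submission
  imports Defs
begin

(* Write L r = [f \<le> r] \<union> \<partial>D.  Every point of L r lies in the closure of D,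
   and on interior D membership in L r just means f x \<le> r, since interior points are not
   on the frontier.  This reduces both parts of the theorem to elementary facts:

   - Outer semicontinuity: a limit x of points y_n \<in> L (r_n) with r_n \<rightarrow> r is in the
     closure of D; if it is not on the frontier it is interior, so eventually
     f y_n \<le> r_n, and lower semicontinuity gives f x \<le> r.
   - Inner semicontinuity is tested through the characterisation "x belongs to the inner
     limit of C_n iff every ball around x eventually meets C_n" (proved once, in general,
     via the distance function infdist).  An interior local minimizer x with f x = r is
     not reached from the levels r - 1/(n+1); conversely, an interior point with f x = r
     that is not a local minimizer has points of strictly smaller value arbitrarily close. *)

definition sublevel_frontier_map :: "'a::metric_space set \<Rightarrow> ('a \<Rightarrow> real) \<Rightarrow> real \<Rightarrow> 'a set" where
  "sublevel_frontier_map D f r = {x\<in>D. f x \<le> r} \<union> frontier D"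

lemma sublevel_frontier_map_interior:
  assumes "x \<in> interior D"
  shows "x \<in> sublevel_frontier_map D f r \<longleftrightarrow> f x \<le> r"
  using assms interior_subset[of D] by (auto simp: sublevel_frontier_map_def frontier_def)

lemma sublevel_frontier_map_subset_closure: "sublevel_frontier_map D f r \<subseteq> closure D"
  using closure_subset[of D] by (auto simp: sublevel_frontier_map_def frontier_def)

lemma lsc_on_sequentially:
  assumes lsc: "lsc_on D f" and "x \<in> D" and yx: "y \<longlonglongrightarrow> x" and sc: "s \<longlonglongrightarrow> c"
    and ev: "eventually (\<lambda>n. y n \<in> D \<and> f (y n) \<le> s n) sequentially"
  shows "f x \<le> c"
proof (rule ccontr)
  assume "\<not> f x \<le> c"
  define e where "e = (f x - c) / 2"
  have "e > 0" using \<open>\<not> f x \<le> c\<close> by (simp add: e_def)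
  then obtain d where "d > 0" and d: "\<forall>z\<in>D. dist z x < d \<longrightarrow> f x - e < f z"
    using lsc \<open>x \<in> D\<close> unfolding lsc_on_def by blast
  have "eventually (\<lambda>n. dist (y n) x < d) sequentially"
    using yx \<open>d > 0\<close> by (simp add: tendsto_iff)
  moreover have "eventually (\<lambda>n. s n < c + e) sequentially"
    using sc \<open>e > 0\<close> by (intro order_tendstoD) auto
  ultimately have "eventually (\<lambda>n. f x - e < c + e) sequentially"
    using ev by eventually_elim (use d in fastforce)
  then show False by (simp add: e_def field_simps)
qed

(* For the hard direction pick y_n \<in> C_n almost realising
   infdist x (C_n), which tends to 0. *)
lemma seq_inner_limit_iff:
  "x \<in> seq_inner_limit C \<longleftrightarrow> (\<forall>e>0. eventually (\<lambda>n. \<exists>y\<in>C n. dist y x < e) sequentially)"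
proof
  assume "x \<in> seq_inner_limit C"
  then obtain y where ev: "eventually (\<lambda>n. y n \<in> C n) sequentially" and "y \<longlonglongrightarrow> x"
    unfolding seq_inner_limit_def by blast
  show "\<forall>e>0. eventually (\<lambda>n. \<exists>y\<in>C n. dist y x < e) sequentially"
  proof (intro allI impI)
    fix e :: real assume "e > 0"
    then have "eventually (\<lambda>n. dist (y n) x < e) sequentially"
      using \<open>y \<longlonglongrightarrow> x\<close> by (simp add: tendsto_iff)
    with ev show "eventually (\<lambda>n. \<exists>y\<in>C n. dist y x < e) sequentially"
      by eventually_elim auto
  qed
next
  assume meets: "\<forall>e>0. eventually (\<lambda>n. \<exists>y\<in>C n. dist y x < e) sequentially"
  have nonempty: "eventually (\<lambda>n. C n \<noteq> {}) sequentially"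
    using meets[rule_format, of 1] by (auto elim: eventually_mono)
  have infdist_0: "(\<lambda>n. infdist x (C n)) \<longlonglongrightarrow> 0"
  proof (rule tendstoI)
    fix e :: real assume "e > 0"
    have "eventually (\<lambda>n. infdist x (C n) < e) sequentially"
      using meets[rule_format, OF \<open>e > 0\<close>]
      by (rule eventually_mono) (metis dist_commute infdist_le le_less_trans)
    then show "eventually (\<lambda>n. dist (infdist x (C n)) 0 < e) sequentially"
      by (simp add: infdist_nonneg)
  qed
  have "\<forall>n. \<exists>z. C n \<noteq> {} \<longrightarrow> z \<in> C n \<and> dist z x < infdist x (C n) + inverse (Suc n)"
  proof (intro allI)
    fix n
    show "\<exists>z. C n \<noteq> {} \<longrightarrow> z \<in> C n \<and> dist z x < infdist x (C n) + inverse (Suc n)"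
    proof (cases "C n = {}")
      case False
      have "(INF z\<in>C n. dist x z) < infdist x (C n) + inverse (Suc n)"
        using False by (simp add: infdist_notempty)
      then have "\<exists>z\<in>C n. dist x z < infdist x (C n) + inverse (Suc n)"
        by (simp only: cINF_less_iff[OF False bdd_below_image_dist])
      then show ?thesis by (auto simp: dist_commute)
    qed simp
  qed
  from choice[OF this] obtain y
    where y: "\<forall>n. C n \<noteq> {} \<longrightarrow> y n \<in> C n \<and> dist (y n) x < infdist x (C n) + inverse (Suc n)"
    by blast
  have bound: "(\<lambda>n. infdist x (C n) + inverse (Suc n)) \<longlonglongrightarrow> 0"
    using tendsto_add[OF infdist_0 LIMSEQ_inverse_real_of_nat] by simp
  have "eventually (\<lambda>n. norm (dist (y n) x) \<le> infdist x (C n) + inverse (Suc n)) sequentially"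
    using nonempty by (rule eventually_mono) (use y in force)
  then have "(\<lambda>n. dist (y n) x) \<longlonglongrightarrow> 0"
    using bound by (rule Lim_null_comparison)
  then have "y \<longlonglongrightarrow> x" by (rule tendsto_dist_iff[THEN iffD2])
  moreover have "eventually (\<lambda>n. y n \<in> C n) sequentially"
    using nonempty by (rule eventually_mono) (use y in blast)
  ultimately show "x \<in> seq_inner_limit C" unfolding seq_inner_limit_def by blast
qed

lemma sublevel_frontier_map_osc:
  assumes lsc: "lsc_on D f"
  shows "osc (sublevel_frontier_map D f)"
  unfolding osc_def osc_at_def outer_limit_def seq_outer_limit_def
proof (intro allI subsetI)
  let ?L = "sublevel_frontier_map D f"
  fix rb x
  assume "x \<in> (\<Union>r\<in>{r. r \<longlonglongrightarrow> rb}. {x. \<exists>\<sigma> y. strict_mono \<sigma> \<and> (\<forall>n. y n \<in> ?L (r (\<sigma> n))) \<and> y \<longlonglongrightarrow> x})"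
  then obtain r \<sigma> y where r: "r \<longlonglongrightarrow> rb" and "strict_mono \<sigma>"
    and y: "\<And>n. y n \<in> ?L (r (\<sigma> n))" and yx: "y \<longlonglongrightarrow> x" by blast
  show "x \<in> ?L rb"
  proof (cases "x \<in> frontier D")
    case True
    then show ?thesis by (simp add: sublevel_frontier_map_def)
  next
    case False
    have "y n \<in> closure D" for n
      using y sublevel_frontier_map_subset_closure by blast
    then have "x \<in> closure D"
      by (intro Lim_in_closed_set[OF closed_closure _ _ yx]) (auto intro!: always_eventually)
    with False have x_int: "x \<in> interior D" by (simp add: frontier_def)
    then have "eventually (\<lambda>n. y n \<in> interior D) sequentially"
      using yx by (intro topological_tendstoD) auto
    then have "eventually (\<lambda>n. y n \<in> D \<and> f (y n) \<le> (r \<circ> \<sigma>) n) sequentially"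
      using y sublevel_frontier_map_interior interior_subset by (fastforce elim!: eventually_mono)
    then have "f x \<le> rb"
      using lsc_on_sequentially[OF lsc _ yx LIMSEQ_subseq_LIMSEQ[OF r \<open>strict_mono \<sigma>\<close>]]
        x_int interior_subset by blast
    with x_int show ?thesis by (simp add: sublevel_frontier_map_interior)
  qed
qed

(* Part 2, necessity: an interior local minimizer at level rb cannot be approached
   from the strictly lower levels rb - 1/(n+1). *)
lemma interior_local_min_not_isc:
  assumes x_int: "x \<in> interior D" and "local_minimizer D f x"
  shows "\<not> isc_at (sublevel_frontier_map D f) (f x)"
proof
  let ?L = "sublevel_frontier_map D f"
  assume isc: "isc_at ?L (f x)"
  obtain e where "e > 0" and min: "\<forall>y\<in>D. dist y x < e \<longrightarrow> f x \<le> f y"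
    using \<open>local_minimizer D f x\<close> unfolding local_minimizer_def by blast
  obtain e' where "e' > 0" "ball x e' \<subseteq> interior D"
    using x_int open_interior open_contains_ball by blast
  define r where "r n = f x - inverse (real (Suc n))" for n
  have "r \<longlonglongrightarrow> f x"
    unfolding r_def using tendsto_diff[OF tendsto_const LIMSEQ_inverse_real_of_nat] by simp
  moreover have "x \<in> ?L (f x)" using x_int by (simp add: sublevel_frontier_map_interior)
  ultimately have "x \<in> seq_inner_limit (\<lambda>n. ?L (r n))"
    using isc unfolding isc_at_def inner_limit_def by blast
  moreover have "min e e' > 0" using \<open>e > 0\<close> \<open>e' > 0\<close> by simp
  ultimately have "eventually (\<lambda>n. \<exists>y\<in>?L (r n). dist y x < min e e') sequentially"
    unfolding seq_inner_limit_iff by blast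
  then obtain n y where y: "y \<in> ?L (r n)" "dist y x < e" "dist y x < e'"
    unfolding eventually_sequentially by auto
  then have "y \<in> interior D" using \<open>ball x e' \<subseteq> interior D\<close> by (auto simp: dist_commute)
  then have "f y \<le> r n" "y \<in> D"
    using y(1) sublevel_frontier_map_interior interior_subset by blast+
  moreover have "f x \<le> f y" using min y(2) \<open>y \<in> D\<close> by blast
  moreover have "r n < f x" by (simp add: r_def)
  ultimately show False by linarith
qed

lemma isc_if_no_interior_local_min:
  assumes no_min: "\<not> (\<exists>x\<in>interior D. f x = rb \<and> local_minimizer D f x)"
  shows "isc_at (sublevel_frontier_map D f) rb"
  unfolding isc_at_def inner_limit_def
proof (intro subsetI InterI, clarsimp)
  let ?L = "sublevel_frontier_map D f"
  fix x r assume x: "x \<in> ?L rb" and r: "r \<longlonglongrightarrow> rb"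
  have "eventually (\<lambda>n. \<exists>y\<in>?L (r n). dist y x < e) sequentially" if "e > 0" for e
  proof -
    have near: "eventually (\<lambda>n. z \<in> ?L (r n)) sequentially"
      if "z \<in> D" "f z < rb" for z
      using order_tendstoD(1)[OF r \<open>f z < rb\<close>] that
      by (auto simp: sublevel_frontier_map_def elim!: eventually_mono)
    consider "x \<in> frontier D" | "x \<in> D" "f x < rb" | "x \<in> interior D" "f x = rb"
      using x closure_subset[of D] by (fastforce simp: sublevel_frontier_map_def frontier_def)
    then obtain z where "dist z x < e" "eventually (\<lambda>n. z \<in> ?L (r n)) sequentially"
    proof cases
      case 1
      then show ?thesis using that[of x] \<open>e > 0\<close> by (simp add: sublevel_frontier_map_def)
    next
      case 2
      then show ?thesis using that[of x] \<open>e > 0\<close> near by simp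
    next
      case 3
      then have "\<not> local_minimizer D f x" using no_min by blast
      then obtain z where "z \<in> D" "dist z x < e" "f z < f x"
        using 3 \<open>e > 0\<close> interior_subset unfolding local_minimizer_def by (meson not_le subsetD)
      then show ?thesis using that[of z] near 3 by simp
    qed
    then show ?thesis by (auto elim!: eventually_mono)
  qed
  then show "x \<in> seq_inner_limit (\<lambda>n. ?L (r n))" by (simp add: seq_inner_limit_iff)
qed

(* The theorem: L is the map above; continuity at rb reduces to inner semicontinuity since
   L is outer semicontinuous. *)
theorem mainTheorem1:
  fixes D :: "'a::complete_space set" and f :: "'a \<Rightarrow> real"
  assumes "closed D" and "lsc_on D f"
  defines "L \<equiv> (\<lambda>r::real. {x\<in>D. f x \<le> r} \<union> frontier D)"
  shows "osc L \<and>
    (\<forall>rb\<in>f ` D. setval_continuous_at L rb \<longleftrightarrow>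
        \<not> (\<exists>x\<in>interior D. f x = rb \<and> local_minimizer D f x))"
proof -
  have L: "L = sublevel_frontier_map D f"
    unfolding L_def sublevel_frontier_map_def by (rule refl)
  have osc: "osc L"
    unfolding L using assms(2) by (rule sublevel_frontier_map_osc)
  have "setval_continuous_at L rb \<longleftrightarrow> \<not> (\<exists>x\<in>interior D. f x = rb \<and> local_minimizer D f x)"
    for rb
  proof -
    have "setval_continuous_at L rb \<longleftrightarrow> isc_at L rb"
      using osc by (simp add: setval_continuous_at_def osc_def)
    then show ?thesis
      unfolding L using interior_local_min_not_isc isc_if_no_interior_local_min by blast
  qed
  with osc show ?thesis by blast
qed

end
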